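(* Let $C_n$ be the cycle on $n\ge 3$ vertices. (1) If $n$ is odd, then $\mathcal{Z}^{\mathrm{TE}}_-(C_n)\cong K_n$ and $\mathcal{Z}^{\mathrm{TS}}_-(C_n)\cong C_n$. (2) If $n$ is even, then $\mathcal{Z}^{\mathrm{TE}}_-(C_n)\cong K_{n/2}\,\square\,K_{n/2}$ and $\mathcal{Z}^{\mathrm{TS}}_-(C_n)\cong \frac{n^2}{4}K_1$ (the edgeless graph on $n^2/4$ vertices).
   Context: $\square$ denotes the Cartesian product. Skew forcing: vertices are colored blue or white; if any vertex $u$ (blue or white) has exactly one white neighbor $v$, then $u$ may force $v$ to become blue. A skew forcing set is a (possibly empty) set of initially blue vertices from which repeated application of this rule turns every vertex blue; $\mathrm{Z}_-(G)$ is the minimum size of a skew forcing set. $\mathcal{Z}^{\mathrm{TE}}_-(G)$ has as vertices the minimum skew forcing sets of $G$, with $S_1S_2$ an edge iff $S_1\setminus S_2=\{v_1\}$ and $S_2\setminus S_1=\{v_2\}$ for some vertices $v_1,v_2$; $\mathcal{Z}^{\mathrm{TS}}_-(G)$ has the same vertices with the additional requirement $v_1v_2\in E(G)$. *)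

theory Defs
  imports Main
begin

text \<open>Simple graphs are given by a vertex set V and a symmetric irreflexive
adjacency predicate E.\<close>

definition graph_iso :: "'a set \<Rightarrow> ('a \<Rightarrow> 'a \<Rightarrow> bool) \<Rightarrow> 'b set \<Rightarrow> ('b \<Rightarrow> 'b \<Rightarrow> bool) \<Rightarrow> bool" where
  "graph_iso V1 E1 V2 E2 \<longleftrightarrow>
     (\<exists>f. bij_betw f V1 V2 \<and> (\<forall>x\<in>V1. \<forall>y\<in>V1. E1 x y \<longleftrightarrow> E2 (f x) (f y)))"

text \<open>One skew forcing step: some vertex u (blue or white) has exactly one white
neighbour v, which becomes blue.\<close>
definition skew_step :: "'a set \<Rightarrow> ('a \<Rightarrow> 'a \<Rightarrow> bool) \<Rightarrow> 'a set \<Rightarrow> 'a set \<Rightarrow> bool" where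
  "skew_step V E B B' \<longleftrightarrow>
     (\<exists>u\<in>V. \<exists>v. {w \<in> V. E u w \<and> w \<notin> B} = {v} \<and> B' = insert v B)"

definition skew_forcing_set :: "'a set \<Rightarrow> ('a \<Rightarrow> 'a \<Rightarrow> bool) \<Rightarrow> 'a set \<Rightarrow> bool" where
  "skew_forcing_set V E S \<longleftrightarrow> S \<subseteq> V \<and> (\<exists>B. (skew_step V E)\<^sup>*\<^sup>* S B \<and> V \<subseteq> B)"

definition Z_minus :: "'a set \<Rightarrow> ('a \<Rightarrow> 'a \<Rightarrow> bool) \<Rightarrow> nat" where
  "Z_minus V E = Min (card ` {S. skew_forcing_set V E S})"

definition min_skew_forcing_sets :: "'a set \<Rightarrow> ('a \<Rightarrow> 'a \<Rightarrow> bool) \<Rightarrow> 'a set set" where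
  "min_skew_forcing_sets V E = {S. skew_forcing_set V E S \<and> card S = Z_minus V E}"

text \<open>Token exchange graph: vertex set min_skew_forcing_sets V E.\<close>
definition skew_TE_edge :: "'a set \<Rightarrow> 'a set \<Rightarrow> bool" where
  "skew_TE_edge S1 S2 \<longleftrightarrow> (\<exists>v1 v2. S1 - S2 = {v1} \<and> S2 - S1 = {v2})"

definition skew_TS_edge :: "('a \<Rightarrow> 'a \<Rightarrow> bool) \<Rightarrow> 'a set \<Rightarrow> 'a set \<Rightarrow> bool" where
  "skew_TS_edge E S1 S2 \<longleftrightarrow> (\<exists>v1 v2. S1 - S2 = {v1} \<and> S2 - S1 = {v2} \<and> E v1 v2)"

definition cycle_V :: "nat \<Rightarrow> nat set" where "cycle_V n = {0..<n}"
definition cycle_E :: "nat \<Rightarrow> nat \<Rightarrow> nat \<Rightarrow> bool" where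
  "cycle_E n i j \<longleftrightarrow> j = (i + 1) mod n \<or> i = (j + 1) mod n"

definition complete_V :: "nat \<Rightarrow> nat set" where "complete_V n = {0..<n}"
definition complete_E :: "nat \<Rightarrow> nat \<Rightarrow> bool" where "complete_E i j \<longleftrightarrow> i \<noteq> j"

definition cart_V :: "'a set \<Rightarrow> 'b set \<Rightarrow> ('a \<times> 'b) set" where "cart_V V1 V2 = V1 \<times> V2"
definition cart_E :: "('a \<Rightarrow> 'a \<Rightarrow> bool) \<Rightarrow> ('b \<Rightarrow> 'b \<Rightarrow> bool) \<Rightarrow> 'a \<times> 'b \<Rightarrow> 'a \<times> 'b \<Rightarrow> bool" where
  "cart_E E1 E2 p q \<longleftrightarrow> (E1 (fst p) (fst q) \<and> snd p = snd q) \<or> (fst p = fst q \<and> E2 (snd p) (snd q))"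

definition empty_V :: "nat \<Rightarrow> nat set" where "empty_V m = {0..<m}"
definition empty_E :: "nat \<Rightarrow> nat \<Rightarrow> bool" where "empty_E i j \<longleftrightarrow> False"

end

theory Submission
  imports Defs
begin

text \<open>Every vertex of the cycle has exactly two neighbours, so if \<open>x\<close> is blue then
\<open>x + 1\<close> forces \<open>x + 2\<close>: blue spreads along \<open>x, x + 2, x + 4, \<dots>\<close>, which is the whole
cycle for odd \<open>n\<close> and one parity class for even \<open>n\<close>. Conversely, call a nonempty vertex
set a skew fort if no vertex has exactly one neighbour in it: a white skew fort stays white
forever. The whole cycle is a skew fort, and for even \<open>n\<close> so is each parity class. Hence the
minimum skew forcing sets are the singletons for odd \<open>n\<close> and the sets \<open>{2i, 2j + 1}\<close> for
even \<open>n\<close>. Two of the latter are one exchange apart iff they agree in exactly one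
coordinate, which gives the rook's graph; an exchange preserves parity while a cycle edge
switches it, so there are no slides.\<close>

lemma graph_iso_sym:
  assumes "graph_iso V1 E1 V2 E2"
  shows "graph_iso V2 E2 V1 E1"
proof -
  from assms obtain f where f: "bij_betw f V1 V2"
    and E: "\<forall>x\<in>V1. \<forall>y\<in>V1. E1 x y \<longleftrightarrow> E2 (f x) (f y)"
    unfolding graph_iso_def by blast
  let ?g = "the_inv_into V1 f"
  have g: "bij_betw ?g V2 V1"
    using f by (rule bij_betw_the_inv_into)
  have "E2 x y \<longleftrightarrow> E1 (?g x) (?g y)" if "x \<in> V2" "y \<in> V2" for x y
  proof -
    have "f (?g x) = x" "f (?g y) = y"
      using f that by (simp_all add: f_the_inv_into_f_bij_betw)
    moreover have "?g x \<in> V1" "?g y \<in> V1"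
      using g that by (simp_all add: bij_betwE)
    ultimately show ?thesis using E by metis
  qed
  then show ?thesis unfolding graph_iso_def using g by blast
qed

lemma graph_iso_image:
  assumes "inj_on f V" "\<And>x y. x \<in> V \<Longrightarrow> y \<in> V \<Longrightarrow> E1 x y \<longleftrightarrow> E2 (f x) (f y)"
  shows "graph_iso V E1 (f ` V) E2"
proof -
  have "bij_betw f V (f ` V)" using assms(1) by (rule bij_betw_imageI) simp
  then show ?thesis unfolding graph_iso_def using assms(2) by blast
qed

lemma graph_iso_edgeless:
  assumes "finite V" "card V = m" "\<And>x y. x \<in> V \<Longrightarrow> y \<in> V \<Longrightarrow> \<not> E x y"
  shows "graph_iso V E (empty_V m) empty_E"
proof -
  have "finite (empty_V m)" "card V = card (empty_V m)"
    using assms(2) by (simp_all add: empty_V_def)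
  then obtain f where "bij_betw f V (empty_V m)"
    using finite_same_card_bij[OF assms(1)] by blast
  then show ?thesis unfolding graph_iso_def empty_E_def using assms(3) by blast
qed

lemma skew_forcing_set_subset: "skew_forcing_set V E S \<Longrightarrow> S \<subseteq> V"
  unfolding skew_forcing_set_def by blast

lemma skew_step_rtranclp_insert:
  assumes "u \<in> V" "y \<in> V" "E u y" "\<forall>w\<in>V. E u w \<longrightarrow> w \<in> B \<or> w = y"
  shows "(skew_step V E)\<^sup>*\<^sup>* B (insert y B)"
proof (cases "y \<in> B")
  case True
  then show ?thesis by (simp add: insert_absorb)
next
  case False
  then have "{w \<in> V. E u w \<and> w \<notin> B} = {y}" using assms by auto
  then have "skew_step V E B (insert y B)" unfolding skew_step_def using assms(1) by blast
  then show ?thesis by blast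
qed

definition skew_fort :: "'a set \<Rightarrow> ('a \<Rightarrow> 'a \<Rightarrow> bool) \<Rightarrow> 'a set \<Rightarrow> bool" where
  "skew_fort V E F \<longleftrightarrow>
     F \<noteq> {} \<and> F \<subseteq> V \<and> (\<forall>u\<in>V. \<forall>v\<in>F. E u v \<longrightarrow> (\<exists>w\<in>F. w \<noteq> v \<and> E u w))"

lemma skew_step_rtranclp_disjoint_fort:
  assumes "(skew_step V E)\<^sup>*\<^sup>* S B" "skew_fort V E F" "S \<inter> F = {}"
  shows "B \<inter> F = {}"
  using assms(1)
proof (induction rule: rtranclp_induct)
  case base
  then show ?case using assms(3) .
next
  case (step B B')
  then obtain u v where u: "u \<in> V" and white: "{w \<in> V. E u w \<and> w \<notin> B} = {v}"
    and B': "B' = insert v B"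
    unfolding skew_step_def by blast
  have "v \<notin> F"
  proof
    assume "v \<in> F"
    moreover have "E u v" using white by blast
    ultimately obtain w where "w \<in> F" "w \<noteq> v" "E u w"
      using assms(2) u unfolding skew_fort_def by blast
    moreover have "w \<notin> B" "w \<in> V"
      using step.IH \<open>w \<in> F\<close> assms(2) unfolding skew_fort_def by blast+
    ultimately show False using white by blast
  qed
  then show ?case using B' step.IH by blast
qed

lemma skew_forcing_set_meets_fort:
  assumes "skew_forcing_set V E S" "skew_fort V E F"
  shows "S \<inter> F \<noteq> {}"
proof
  assume "S \<inter> F = {}"
  obtain B where "(skew_step V E)\<^sup>*\<^sup>* S B" "V \<subseteq> B"
    using assms(1) unfolding skew_forcing_set_def by blast
  with \<open>S \<inter> F = {}\<close> have "B \<inter> F = {}" "F \<subseteq> B"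
    using skew_step_rtranclp_disjoint_fort assms(2) unfolding skew_fort_def by blast+
  then show False using assms(2) unfolding skew_fort_def by blast
qed

lemma Z_minus_eqI:
  assumes "finite V" "skew_forcing_set V E S" "card S = k"
    "\<And>S. skew_forcing_set V E S \<Longrightarrow> k \<le> card S"
  shows "Z_minus V E = k"
proof -
  have "finite {S. skew_forcing_set V E S}"
    by (rule finite_subset[of _ "Pow V"]) (use assms(1) skew_forcing_set_subset in auto)
  then show ?thesis unfolding Z_minus_def by (intro Min_eqI) (use assms in auto)
qed

lemma cycle_E_iff:
  assumes "n \<ge> 3" "u < n" "w < n"
  shows "cycle_E n u w \<longleftrightarrow> w = (u + 1) mod n \<or> w = (u + n - 1) mod n"
  using assms unfolding cycle_E_def by (cases "u = 0"; cases "w + 1 = n") (auto simp: mod_if)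

lemma cycle_neighbours_distinct:
  fixes n u :: nat
  assumes "n \<ge> 3" "u < n"
  shows "(u + 1) mod n \<noteq> (u + n - 1) mod n"
  using assms by (cases "u = 0"; cases "u + 1 = n") (auto simp: mod_if)

lemma cycle_other_neighbour:
  assumes "n \<ge> 3" "u < n" "v < n" "cycle_E n u v"
  obtains w where "w < n" "w \<noteq> v" "cycle_E n u w"
proof -
  let ?s = "(u + 1) mod n" and ?p = "(u + n - 1) mod n"
  have "?s < n" "?p < n" using assms(1) by simp_all
  then have "cycle_E n u ?s" "cycle_E n u ?p" "?s \<noteq> ?p"
    using cycle_E_iff[OF assms(1,2)] cycle_neighbours_distinct[OF assms(1,2)] by blast+
  moreover have "v = ?s \<or> v = ?p" using cycle_E_iff assms by blast
  ultimately show ?thesis using that \<open>?s < n\<close> \<open>?p < n\<close> by metis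
qed

lemma cycle_E_parity:
  assumes "even n" "cycle_E n x y"
  shows "even x \<longleftrightarrow> odd y"
proof -
  have "even (m mod n) \<longleftrightarrow> even m" for m
    using assms(1) by (simp add: dvd_mod_iff)
  then show ?thesis using assms(2) unfolding cycle_E_def by (elim disjE) simp_all
qed

lemma cycle_E_irrefl: "n \<ge> 2 \<Longrightarrow> x < n \<Longrightarrow> \<not> cycle_E n x x"
  unfolding cycle_E_def by (cases "x + 1 = n") auto

lemma skew_fort_cycle:
  assumes "n \<ge> 3"
  shows "skew_fort (cycle_V n) (cycle_E n) (cycle_V n)"
proof -
  have "\<exists>w\<in>cycle_V n. w \<noteq> v \<and> cycle_E n u w"
    if uv: "u < n" "v < n" "cycle_E n u v" for u v
  proof -
    obtain w where "w < n" "w \<noteq> v" "cycle_E n u w"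
      using cycle_other_neighbour[OF assms uv] .
    then show ?thesis by (auto simp: cycle_V_def)
  qed
  then show ?thesis using assms unfolding skew_fort_def by (auto simp: cycle_V_def)
qed

lemma skew_fort_cycle_parity:
  assumes "n \<ge> 3" "even n"
  shows "skew_fort (cycle_V n) (cycle_E n) {v \<in> cycle_V n. even v = p}"
proof -
  have "(if p then 0 else 1) \<in> {v \<in> cycle_V n. even v = p}"
    using assms(1) by (simp add: cycle_V_def)
  moreover have "\<exists>w \<in> {v \<in> cycle_V n. even v = p}. w \<noteq> v \<and> cycle_E n u w"
    if uv: "u < n" "v < n" "even v = p" "cycle_E n u v" for u v
  proof -
    obtain w where "w < n" "w \<noteq> v" "cycle_E n u w"
      using cycle_other_neighbour[OF assms(1) uv(1,2,4)] .
    moreover have "even w \<longleftrightarrow> even v"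
      using cycle_E_parity[OF assms(2)] \<open>cycle_E n u w\<close> \<open>cycle_E n u v\<close> by blast
    ultimately show ?thesis using uv(3) by (auto simp: cycle_V_def)
  qed
  ultimately show ?thesis unfolding skew_fort_def by (auto simp: cycle_V_def)
qed

lemma cycle_forces_skip:
  assumes "n \<ge> 3" "x < n" "x \<in> B"
  shows "(skew_step (cycle_V n) (cycle_E n))\<^sup>*\<^sup>* B (insert ((x + 2) mod n) B)"
proof (rule skew_step_rtranclp_insert)
  let ?u = "(x + 1) mod n"
  have u: "?u < n" using assms(1) by simp
  have "(?u + 1) mod n = (x + 2) mod n" by (simp add: mod_Suc_eq)
  moreover have "(?u + n - 1) mod n = x" using assms(1,2) by (cases "x + 1 = n") (auto simp: mod_if)
  ultimately show "\<forall>w\<in>cycle_V n. cycle_E n ?u w \<longrightarrow> w \<in> B \<or> w = (x + 2) mod n"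
    using cycle_E_iff[OF assms(1) u] assms(3) by (auto simp: cycle_V_def)
  show "cycle_E n ?u ((x + 2) mod n)"
    by (simp add: cycle_E_def mod_Suc_eq)
  show "?u \<in> cycle_V n" "(x + 2) mod n \<in> cycle_V n"
    using assms(1) by (simp_all add: cycle_V_def)
qed

lemma cycle_forces_orbit:
  assumes "n \<ge> 3" "x < n" "x \<in> B"
  shows "(skew_step (cycle_V n) (cycle_E n))\<^sup>*\<^sup>* B (B \<union> (\<lambda>j. (x + 2 * j) mod n) ` {..k})"
proof (induction k)
  case 0
  then show ?case using assms(2,3) by (simp add: insert_absorb)
next
  case (Suc k)
  let ?C = "B \<union> (\<lambda>j. (x + 2 * j) mod n) ` {..k}"
  have "((x + 2 * k) mod n + 2) mod n = (x + 2 * k + 2) mod n"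
    by (rule mod_add_left_eq)
  then have "((x + 2 * k) mod n + 2) mod n = (x + 2 * Suc k) mod n"
    by simp
  moreover have "(skew_step (cycle_V n) (cycle_E n))\<^sup>*\<^sup>* ?C (insert (((x + 2 * k) mod n + 2) mod n) ?C)"
    using assms(1) by (intro cycle_forces_skip) auto
  ultimately show ?case
    using Suc.IH by (simp add: atMost_Suc)
qed

lemma cycle_orbit_mem:
  fixes n x v k :: nat
  assumes "x < n" "v < n" "0 < k" "even (v + k * n - x)"
  shows "v \<in> (\<lambda>j. (x + 2 * j) mod n) ` {..k * n}"
proof
  let ?j = "(v + k * n - x) div 2"
  have "n \<le> k * n" using assms(3) by simp
  then have "x \<le> k * n" using assms(1) by linarith
  then have "x + 2 * ?j = v + k * n" using assms(4) by simp
  then show "v = (x + 2 * ?j) mod n" using assms(2) by simp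
  have "v + k * n - x \<le> 2 * (k * n)" using assms(2) \<open>n \<le> k * n\<close> by linarith
  then show "?j \<in> {..k * n}" using div_le_mono[of _ _ 2] by fastforce
qed

lemma skew_forcing_set_cycle_odd:
  assumes "n \<ge> 3" "odd n" "x < n"
  shows "skew_forcing_set (cycle_V n) (cycle_E n) {x}"
proof -
  let ?orbit = "(\<lambda>j. (x + 2 * j) mod n) ` {..2 * n}"
  have "cycle_V n \<subseteq> ?orbit"
  proof
    fix v assume "v \<in> cycle_V n"
    then have "v < n" by (simp add: cycle_V_def)
    show "v \<in> ?orbit"
    proof (cases "even (v + n - x)")
      case True
      then show ?thesis using cycle_orbit_mem[OF assms(3) \<open>v < n\<close>, of 1] by auto
    next
      case False
      then have "even (v + 2 * n - x)" using assms(2,3) by presburger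
      then show ?thesis using cycle_orbit_mem[OF assms(3) \<open>v < n\<close>, of 2] by auto
    qed
  qed
  moreover have "(skew_step (cycle_V n) (cycle_E n))\<^sup>*\<^sup>* {x} ({x} \<union> ?orbit)"
    using assms(1,3) by (intro cycle_forces_orbit) auto
  moreover have "{x} \<subseteq> cycle_V n" using assms(3) by (simp add: cycle_V_def)
  ultimately show ?thesis unfolding skew_forcing_set_def by blast
qed

lemma skew_forcing_set_cycle_even:
  assumes "n \<ge> 3" "even n" "a < n" "b < n" "even a" "odd b"
  shows "skew_forcing_set (cycle_V n) (cycle_E n) {a, b}"
proof -
  let ?orbit = "\<lambda>x. (\<lambda>j. (x + 2 * j) mod n) ` {..n}"
  have "cycle_V n \<subseteq> ?orbit a \<union> ?orbit b"
  proof
    fix v assume "v \<in> cycle_V n"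
    then have "v < n" by (simp add: cycle_V_def)
    show "v \<in> ?orbit a \<union> ?orbit b"
    proof (cases "even v")
      case True
      then have "even (v + n - a)" using assms(2,3,5) by presburger
      then show ?thesis using cycle_orbit_mem[OF assms(3) \<open>v < n\<close>, of 1] by simp
    next
      case False
      then have "even (v + n - b)" using assms(2,4,6) by presburger
      then show ?thesis using cycle_orbit_mem[OF assms(4) \<open>v < n\<close>, of 1] by simp
    qed
  qed
  moreover have "(skew_step (cycle_V n) (cycle_E n))\<^sup>*\<^sup>* {a, b} ({a, b} \<union> ?orbit a \<union> ?orbit b)"
  proof (rule rtranclp_trans)
    show "(skew_step (cycle_V n) (cycle_E n))\<^sup>*\<^sup>* {a, b} ({a, b} \<union> ?orbit a)"
      using assms(1,3) by (intro cycle_forces_orbit) auto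
    show "(skew_step (cycle_V n) (cycle_E n))\<^sup>*\<^sup>* ({a, b} \<union> ?orbit a) ({a, b} \<union> ?orbit a \<union> ?orbit b)"
      using assms(1,4) by (intro cycle_forces_orbit) auto
  qed
  moreover have "{a, b} \<subseteq> cycle_V n" using assms(3,4) by (simp add: cycle_V_def)
  ultimately show ?thesis unfolding skew_forcing_set_def by blast
qed

lemma skew_forcing_set_cycle_finite:
  assumes "skew_forcing_set (cycle_V n) (cycle_E n) S"
  shows "finite S"
  using finite_subset[OF skew_forcing_set_subset[OF assms]] by (simp add: cycle_V_def)

lemma skew_forcing_set_cycle_even_parities:
  assumes "n \<ge> 3" "even n" "skew_forcing_set (cycle_V n) (cycle_E n) S"
  obtains a b where "a \<in> S" "b \<in> S" "even a" "odd b"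
proof -
  have "S \<inter> {v \<in> cycle_V n. even v = p} \<noteq> {}" for p
    using skew_forcing_set_meets_fort[OF assms(3) skew_fort_cycle_parity[OF assms(1,2)]] .
  then show ?thesis using that by blast
qed

lemma Z_minus_cycle_odd:
  assumes "n \<ge> 3" "odd n"
  shows "Z_minus (cycle_V n) (cycle_E n) = 1"
proof (rule Z_minus_eqI)
  show "skew_forcing_set (cycle_V n) (cycle_E n) {0}"
    using skew_forcing_set_cycle_odd assms by simp
  fix S assume S: "skew_forcing_set (cycle_V n) (cycle_E n) S"
  then have "S \<noteq> {}"
    using skew_forcing_set_meets_fort[OF S skew_fort_cycle[OF assms(1)]] by blast
  then show "1 \<le> card S"
    using skew_forcing_set_cycle_finite[OF S] by (simp add: Suc_leI card_gt_0_iff)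
qed (simp_all add: cycle_V_def)

lemma Z_minus_cycle_even:
  assumes "n \<ge> 3" "even n"
  shows "Z_minus (cycle_V n) (cycle_E n) = 2"
proof (rule Z_minus_eqI)
  show "skew_forcing_set (cycle_V n) (cycle_E n) {0, 1}"
    using skew_forcing_set_cycle_even assms by simp
  fix S assume S: "skew_forcing_set (cycle_V n) (cycle_E n) S"
  obtain a b where "a \<in> S" "b \<in> S" "even a" "odd b"
    using skew_forcing_set_cycle_even_parities[OF assms S] .
  then have "card {a, b} \<le> card S" "a \<noteq> b"
    using skew_forcing_set_cycle_finite[OF S] by (auto intro: card_mono)
  then show "2 \<le> card S" by simp
qed (simp_all add: cycle_V_def)

lemma min_skew_forcing_sets_cycle_odd:
  assumes "n \<ge> 3" "odd n"
  shows "min_skew_forcing_sets (cycle_V n) (cycle_E n) = (\<lambda>v. {v}) ` cycle_V n"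
proof (intro set_eqI iffI)
  fix S assume "S \<in> min_skew_forcing_sets (cycle_V n) (cycle_E n)"
  then have S: "skew_forcing_set (cycle_V n) (cycle_E n) S" "card S = 1"
    unfolding min_skew_forcing_sets_def Z_minus_cycle_odd[OF assms] by auto
  then obtain x where "S = {x}" by (auto simp: card_Suc_eq)
  then show "S \<in> (\<lambda>v. {v}) ` cycle_V n" using skew_forcing_set_subset[OF S(1)] by auto
next
  fix S assume "S \<in> (\<lambda>v. {v}) ` cycle_V n"
  then show "S \<in> min_skew_forcing_sets (cycle_V n) (cycle_E n)"
    unfolding min_skew_forcing_sets_def Z_minus_cycle_odd[OF assms]
    using skew_forcing_set_cycle_odd[OF assms] by (auto simp: cycle_V_def)
qed

definition parity_pair :: "nat \<times> nat \<Rightarrow> nat set" where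
  "parity_pair p = {2 * fst p, 2 * snd p + 1}"

lemma inj_parity_pair: "inj parity_pair"
proof (rule injI)
  fix p q assume "parity_pair p = parity_pair q"
  moreover have "2 * i \<noteq> 2 * j + 1" for i j :: nat by presburger
  ultimately show "p = q" unfolding parity_pair_def by (auto simp: doubleton_eq_iff prod_eq_iff)
qed

lemma min_skew_forcing_sets_cycle_even:
  assumes "n \<ge> 3" "even n"
  shows "min_skew_forcing_sets (cycle_V n) (cycle_E n)
           = parity_pair ` ({0..<n div 2} \<times> {0..<n div 2})"
proof (intro set_eqI iffI)
  fix S assume "S \<in> min_skew_forcing_sets (cycle_V n) (cycle_E n)"
  then have S: "skew_forcing_set (cycle_V n) (cycle_E n) S" "card S = 2"
    unfolding min_skew_forcing_sets_def Z_minus_cycle_even[OF assms] by auto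
  obtain a b where ab: "a \<in> S" "b \<in> S" "even a" "odd b"
    using skew_forcing_set_cycle_even_parities[OF assms S(1)] .
  moreover have "a \<noteq> b" using ab by auto
  ultimately have "S = {a, b}"
    using S(2) skew_forcing_set_cycle_finite[OF S(1)] by (intro card_subset_eq[symmetric]) auto
  moreover have "a < n" "b < n" using ab skew_forcing_set_subset[OF S(1)] by (auto simp: cycle_V_def)
  ultimately have "S = parity_pair (a div 2, b div 2)" "a div 2 < n div 2" "b div 2 < n div 2"
    using ab(3,4) assms(2) by (auto simp: parity_pair_def)
  then show "S \<in> parity_pair ` ({0..<n div 2} \<times> {0..<n div 2})" by auto
next
  fix S assume "S \<in> parity_pair ` ({0..<n div 2} \<times> {0..<n div 2})"
  then obtain i j where ij: "i < n div 2" "j < n div 2" "S = {2 * i, 2 * j + 1}"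
    by (auto simp: parity_pair_def)
  have "2 * i \<noteq> 2 * j + 1" by presburger
  then have "card S = 2" using ij(3) by simp
  moreover have "skew_forcing_set (cycle_V n) (cycle_E n) S"
    using skew_forcing_set_cycle_even[OF assms, of "2 * i" "2 * j + 1"] ij assms(2) by auto
  ultimately show "S \<in> min_skew_forcing_sets (cycle_V n) (cycle_E n)"
    unfolding min_skew_forcing_sets_def Z_minus_cycle_even[OF assms] by auto
qed

lemma skew_TE_edge_singleton: "skew_TE_edge {x} {y} \<longleftrightarrow> x \<noteq> y"
  unfolding skew_TE_edge_def by (cases "x = y") auto

lemma skew_TS_edge_singleton: "skew_TS_edge E {x} {y} \<longleftrightarrow> x \<noteq> y \<and> E x y"
  unfolding skew_TS_edge_def by (cases "x = y") auto

lemma doubleton_diff_sides: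
  assumes "P a" "P a'" "\<not> P b" "\<not> P b'"
  shows "{a, b} - {a', b'} = (if a = a' then {} else {a}) \<union> (if b = b' then {} else {b})"
  using assms by auto

lemma skew_TE_edge_doubleton:
  assumes "P a" "P a'" "\<not> P b" "\<not> P b'"
  shows "skew_TE_edge {a, b} {a', b'} \<longleftrightarrow> (a \<noteq> a' \<and> b = b') \<or> (a = a' \<and> b \<noteq> b')"
proof -
  note doubleton_diff_sides[of P, OF assms] doubleton_diff_sides[of P, OF assms(2,1,4,3)]
  moreover have "a \<noteq> b" using assms by auto
  ultimately show ?thesis unfolding skew_TE_edge_def by (cases "a = a'"; cases "b = b'") simp_all
qed

lemma doubleton_exchange_same_side:
  assumes "P a" "P a'" "\<not> P b" "\<not> P b'"
    and "{a, b} - {a', b'} = {v1}" "{a', b'} - {a, b} = {v2}"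
  shows "P v1 \<longleftrightarrow> P v2"
proof -
  note doubleton_diff_sides[of P, OF assms(1-4)] doubleton_diff_sides[of P, OF assms(2,1,4,3)]
  moreover have "a \<noteq> b" using assms by auto
  ultimately show ?thesis using assms by (cases "a = a'"; cases "b = b'") (auto split: if_splits)
qed

lemma skew_TE_graph_cycle_odd:
  assumes "n \<ge> 3" "odd n"
  shows "graph_iso (min_skew_forcing_sets (cycle_V n) (cycle_E n)) skew_TE_edge
                   (complete_V n) complete_E"
proof -
  have "graph_iso (cycle_V n) complete_E ((\<lambda>v. {v}) ` cycle_V n) skew_TE_edge"
    by (rule graph_iso_image) (simp_all add: skew_TE_edge_singleton complete_E_def)
  moreover have "complete_V n = cycle_V n" by (simp add: complete_V_def cycle_V_def)
  ultimately show ?thesis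
    unfolding min_skew_forcing_sets_cycle_odd[OF assms] by (simp add: graph_iso_sym)
qed

lemma skew_TS_graph_cycle_odd:
  assumes "n \<ge> 3" "odd n"
  shows "graph_iso (min_skew_forcing_sets (cycle_V n) (cycle_E n)) (skew_TS_edge (cycle_E n))
                   (cycle_V n) (cycle_E n)"
proof -
  have "graph_iso (cycle_V n) (cycle_E n) ((\<lambda>v. {v}) ` cycle_V n) (skew_TS_edge (cycle_E n))"
    using assms(1) by (intro graph_iso_image) (auto simp: skew_TS_edge_singleton cycle_V_def cycle_E_irrefl)
  then show ?thesis
    unfolding min_skew_forcing_sets_cycle_odd[OF assms] by (rule graph_iso_sym)
qed

lemma skew_TE_edge_parity_pair:
  "skew_TE_edge (parity_pair p) (parity_pair q) \<longleftrightarrow> cart_E complete_E complete_E p q"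
proof -
  have "skew_TE_edge (parity_pair p) (parity_pair q)
          \<longleftrightarrow> (2 * fst p \<noteq> 2 * fst q \<and> 2 * snd p + 1 = 2 * snd q + 1)
            \<or> (2 * fst p = 2 * fst q \<and> 2 * snd p + 1 \<noteq> 2 * snd q + 1)"
    unfolding parity_pair_def by (rule skew_TE_edge_doubleton[where P = even]) simp_all
  then show ?thesis by (simp add: cart_E_def complete_E_def)
qed

lemma not_skew_TS_edge_parity_pair:
  assumes "even n"
  shows "\<not> skew_TS_edge (cycle_E n) (parity_pair p) (parity_pair q)"
proof
  assume "skew_TS_edge (cycle_E n) (parity_pair p) (parity_pair q)"
  then obtain v1 v2 where v: "parity_pair p - parity_pair q = {v1}"
    "parity_pair q - parity_pair p = {v2}" "cycle_E n v1 v2"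
    unfolding skew_TS_edge_def by blast
  have "even v1 \<longleftrightarrow> even v2"
    using doubleton_exchange_same_side[where P = even, OF _ _ _ _ v(1,2)[unfolded parity_pair_def]]
    by simp
  then show False using cycle_E_parity[OF assms v(3)] by simp
qed

lemma skew_TE_graph_cycle_even:
  assumes "n \<ge> 3" "even n"
  shows "graph_iso (min_skew_forcing_sets (cycle_V n) (cycle_E n)) skew_TE_edge
           (cart_V (complete_V (n div 2)) (complete_V (n div 2))) (cart_E complete_E complete_E)"
proof -
  let ?P = "{0..<n div 2} \<times> {0..<n div 2}"
  have "graph_iso ?P (cart_E complete_E complete_E) (parity_pair ` ?P) skew_TE_edge"
    using inj_on_subset[OF inj_parity_pair subset_UNIV]
    by (rule graph_iso_image) (simp add: skew_TE_edge_parity_pair)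
  then show ?thesis
    unfolding min_skew_forcing_sets_cycle_even[OF assms]
    by (simp add: graph_iso_sym cart_V_def complete_V_def)
qed

lemma skew_TS_graph_cycle_even:
  assumes "n \<ge> 3" "even n"
  shows "graph_iso (min_skew_forcing_sets (cycle_V n) (cycle_E n)) (skew_TS_edge (cycle_E n))
                   (empty_V (n^2 div 4)) empty_E"
proof -
  let ?P = "{0..<n div 2} \<times> {0..<n div 2}"
  have "card (parity_pair ` ?P) = (n div 2) * (n div 2)"
    using inj_on_subset[OF inj_parity_pair subset_UNIV] by (simp add: card_image)
  also have "\<dots> = n^2 div 4" using assms(2) by (auto elim!: evenE simp: power2_eq_square)
  finally show ?thesis
    unfolding min_skew_forcing_sets_cycle_even[OF assms]
    by (intro graph_iso_edgeless) (auto simp: not_skew_TS_edge_parity_pair[OF assms(2)])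
qed

theorem theorem5p8:
  fixes n :: nat
  assumes "n \<ge> 3"
  shows "(odd n \<longrightarrow>
            graph_iso (min_skew_forcing_sets (cycle_V n) (cycle_E n)) skew_TE_edge
                      (complete_V n) complete_E
          \<and> graph_iso (min_skew_forcing_sets (cycle_V n) (cycle_E n)) (skew_TS_edge (cycle_E n))
                      (cycle_V n) (cycle_E n))
       \<and> (even n \<longrightarrow>
            graph_iso (min_skew_forcing_sets (cycle_V n) (cycle_E n)) skew_TE_edge
                      (cart_V (complete_V (n div 2)) (complete_V (n div 2))) (cart_E complete_E complete_E)
          \<and> graph_iso (min_skew_forcing_sets (cycle_V n) (cycle_E n)) (skew_TS_edge (cycle_E n))
                      (empty_V (n^2 div 4)) empty_E)"
  using assms skew_TE_graph_cycle_odd skew_TS_graph_cycle_odd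
    skew_TE_graph_cycle_even skew_TS_graph_cycle_even by blast

end
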